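(* Let $G$ be a group, let $\pi:(0,1]\to(0,1]$ be non-decreasing with $\pi(\gamma)\to0$ as $\gamma\to0$, and let $M=(\mu_n)_{n=1}^\infty$ be a sequence of probability measures on $G$ that detects index uniformly at rate $\pi$. Let $\alpha\in(0,1]$ and suppose $\textup{dc}_M(G)\ge\alpha$. Let $\gamma\in(0,1)$ be such that $\pi(\gamma)<\alpha$, and let $X=\{x\in G:[G:C_G(x)]\le\frac{1}{\gamma}\}$. Then $\limsup_{n\to\infty}\mu_n(X)\ge\alpha-\pi(\gamma)$.
   Context: $M$ detects index uniformly at rate $\pi$ if for every $\varepsilon>0$ there exists $N$ such that for every $m\in\mathbb{N}$ and every subgroup $H$ with $[G:H]\ge m$ (possibly infinite) we have $\mu_n(H)\le\pi(\frac1m)+\varepsilon$ for all $n\ge N$. $\textup{dc}_M(G)=\limsup_n(\mu_n\times\mu_n)(\{(x,y):xy=yx\})$. $C_G(x)$ is the centraliser of $x$. *)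

theory Defs
  imports "HOL-Probability.Probability" "HOL-Algebra.Coset"
begin

definition gindex :: "('a, 'b) monoid_scheme \<Rightarrow> 'a set \<Rightarrow> ereal" where
  "gindex G H = (if finite (rcosets\<^bsub>G\<^esub> H) then ereal (real (card (rcosets\<^bsub>G\<^esub> H))) else \<infinity>)"

definition centraliser :: "('a, 'b) monoid_scheme \<Rightarrow> 'a \<Rightarrow> 'a set" where
  "centraliser G x = {y \<in> carrier G. x \<otimes>\<^bsub>G\<^esub> y = y \<otimes>\<^bsub>G\<^esub> x}"

definition detects_index_uniformly ::
  "('a, 'b) monoid_scheme \<Rightarrow> (nat \<Rightarrow> 'a measure) \<Rightarrow> (real \<Rightarrow> real) \<Rightarrow> bool" where
  "detects_index_uniformly G M \<pi> \<longleftrightarrow>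
     (\<forall>\<epsilon>>0. \<exists>N. \<forall>m::nat. m \<ge> 1 \<longrightarrow> (\<forall>H. subgroup H G \<and> gindex G H \<ge> ereal (real m) \<longrightarrow>
        (\<forall>n\<ge>N. measure (M n) H \<le> \<pi> (1 / real m) + \<epsilon>)))"

definition dc :: "('a, 'b) monoid_scheme \<Rightarrow> (nat \<Rightarrow> 'a measure) \<Rightarrow> ereal" where
  "dc G M = limsup (\<lambda>n. ereal (measure (M n \<Otimes>\<^sub>M M n)
       {(x, y). x \<in> carrier G \<and> y \<in> carrier G \<and> x \<otimes>\<^bsub>G\<^esub> y = y \<otimes>\<^bsub>G\<^esub> x}))"

end

theory Submission
  imports Defs
begin

text \<open>
  Conditioning on the first coordinate, a random commuting pair (x, y) has y in the centraliser
  of x. Outside X the centraliser has index greater than 1/\<gamma>, hence eventually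
  measure at most \<pi>(\<gamma>) + \<epsilon>; inside X we bound the conditional probability
  by 1. So the commuting probability is at most \<mu>_n(X) + \<pi>(\<gamma>) + \<epsilon> for large n,
  and taking limsup gives \<alpha> \<le> limsup \<mu>_n(X) + \<pi>(\<gamma>).
\<close>

lemma measure_pair_le_by_sections:
  assumes "prob_space N" "prob_space K" "X \<in> sets N" "c \<ge> 0"
    and sections: "\<And>x. x \<in> space N - X \<Longrightarrow> measure K (Pair x -` S) \<le> c"
  shows "measure (N \<Otimes>\<^sub>M K) S \<le> measure N X + c"
proof (cases "S \<in> sets (N \<Otimes>\<^sub>M K)")
  case True
  interpret N: prob_space N by fact
  interpret K: prob_space K by fact
  interpret NK: pair_prob_space N K ..
  have "emeasure (N \<Otimes>\<^sub>M K) S = (\<integral>\<^sup>+x. emeasure K (Pair x -` S) \<partial>N)"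
    using True by (rule K.emeasure_pair_measure_alt)
  also have "\<dots> \<le> (\<integral>\<^sup>+x. indicator X x + ennreal c \<partial>N)"
  proof (rule nn_integral_mono)
    fix x assume "x \<in> space N"
    then show "emeasure K (Pair x -` S) \<le> indicator X x + ennreal c"
      using sections[of x] K.emeasure_le_1[of "Pair x -` S"]
      by (cases "x \<in> X") (auto simp: K.emeasure_eq_measure ennreal_leI add_increasing2)
  qed
  also have "\<dots> = ennreal (measure N X + c)"
    using \<open>X \<in> sets N\<close> \<open>c \<ge> 0\<close>
    by (simp add: nn_integral_add N.emeasure_eq_measure N.prob_space ennreal_plus)
  finally show ?thesis
    using \<open>c \<ge> 0\<close> by (simp add: NK.emeasure_eq_measure ennreal_le_iff del: ennreal_plus)
qed (simp add: measure_notin_sets \<open>c \<ge> 0\<close>)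

lemma (in group) subgroup_centraliser:
  assumes "x \<in> carrier G"
  shows "subgroup (centraliser G x) G"
proof (rule subgroupI)
  fix a assume "a \<in> centraliser G x"
  then have a: "a \<in> carrier G" and "x \<otimes> a = a \<otimes> x" unfolding centraliser_def by auto
  then have "x \<otimes> inv a = inv a \<otimes> (x \<otimes> a) \<otimes> inv a"
    using assms by (simp add: m_assoc[symmetric])
  also have "\<dots> = inv a \<otimes> x" using a assms by (simp add: m_assoc)
  finally show "inv a \<in> centraliser G x" using a unfolding centraliser_def by auto
next
  fix a b assume "a \<in> centraliser G x" "b \<in> centraliser G x"
  then show "a \<otimes> b \<in> centraliser G x"
    using assms unfolding centraliser_def by (auto simp: m_assoc[symmetric]) (simp add: m_assoc)
qed (use assms in \<open>auto simp: centraliser_def\<close>)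

lemma gindex_ge_floor_Suc:
  assumes "\<not> gindex G H \<le> ereal r" "r > 0"
  shows "gindex G H \<ge> ereal (real (nat \<lfloor>r\<rfloor> + 1))"
proof (cases "finite (rcosets\<^bsub>G\<^esub> H)")
  case True
  then have "r < real (card (rcosets\<^bsub>G\<^esub> H))"
    using assms unfolding gindex_def by auto
  then have "\<lfloor>r\<rfloor> < int (card (rcosets\<^bsub>G\<^esub> H))" by linarith
  then show ?thesis
    using True \<open>r > 0\<close> unfolding gindex_def by simp
qed (simp add: gindex_def)

text \<open>The index bound m := \<lfloor>1/\<gamma>\<rfloor> + 1 satisfies 1/m < \<gamma>, so monotonicity of
  \<pi> turns the rate \<pi>(1/m) into \<pi>(\<gamma>).\<close>

lemma detects_index_uniformly_eventually_le:
  assumes "detects_index_uniformly G M \<pi>" "mono_on {0<..1} \<pi>"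
    and "0 < \<gamma>" "\<gamma> \<le> 1" "e > 0"
  shows "\<exists>N. \<forall>n\<ge>N. \<forall>H. subgroup H G \<and> \<not> gindex G H \<le> ereal (1 / \<gamma>)
           \<longrightarrow> measure (M n) H \<le> \<pi> \<gamma> + e"
proof -
  define m where "m = nat \<lfloor>1 / \<gamma>\<rfloor> + 1"
  have "m \<ge> 1" unfolding m_def by simp
  obtain N where N: "\<And>H n. subgroup H G \<Longrightarrow> gindex G H \<ge> ereal (real m) \<Longrightarrow> n \<ge> N
      \<Longrightarrow> measure (M n) H \<le> \<pi> (1 / real m) + e"
    using assms(1) \<open>e > 0\<close> \<open>m \<ge> 1\<close> unfolding detects_index_uniformly_def by blast
  have "1 / \<gamma> < real m" unfolding m_def by linarith
  then have "1 / real m < \<gamma>"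
    using \<open>0 < \<gamma>\<close> \<open>m \<ge> 1\<close> by (simp add: field_simps)
  then have "\<pi> (1 / real m) \<le> \<pi> \<gamma>"
    using \<open>m \<ge> 1\<close> \<open>0 < \<gamma>\<close> \<open>\<gamma> \<le> 1\<close> by (intro mono_onD[OF assms(2)]) auto
  moreover have "gindex G H \<ge> ereal (real m)" if "\<not> gindex G H \<le> ereal (1 / \<gamma>)" for H
    using gindex_ge_floor_Suc[OF that] \<open>0 < \<gamma>\<close> unfolding m_def by simp
  ultimately show ?thesis
    using N by (meson add_le_cancel_right order_trans)
qed

lemma limsup_ge_diff_of_eventually_le:
  fixes a b :: "nat \<Rightarrow> real"
  assumes "ereal \<alpha> \<le> limsup (\<lambda>n. ereal (a n))"
    and "\<And>e. e > 0 \<Longrightarrow> \<forall>\<^sub>F n in sequentially. a n \<le> b n + (c + e)"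
  shows "ereal (\<alpha> - c) \<le> limsup (\<lambda>n. ereal (b n))"
proof -
  let ?b = "limsup (\<lambda>n. ereal (b n))"
  have bound: "ereal \<alpha> \<le> ?b + ereal (c + e)" if "e > 0" for e
  proof -
    have "ereal \<alpha> \<le> limsup (\<lambda>n. ereal (a n))" by fact
    also have "\<dots> \<le> limsup (\<lambda>n. ereal (b n) + ereal (c + e))"
      using assms(2)[OF that] by (intro Limsup_mono) (auto elim: eventually_mono)
    also have "\<dots> \<le> ?b + limsup (\<lambda>n. ereal (c + e))"
      by (rule ereal_limsup_add_mono)
    finally show ?thesis by (simp add: Limsup_const)
  qed
  show ?thesis
  proof (cases ?b)
    case (real l)
    have "\<alpha> - c \<le> l"
      by (rule field_le_epsilon) (use bound real in fastforce)
    with real show ?thesis by simp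
  qed (use bound[of 1] in auto)
qed

theorem proposition2p1:
  fixes G :: "('a, 'b) monoid_scheme" and \<pi> :: "real \<Rightarrow> real"
    and M :: "nat \<Rightarrow> 'a measure" and \<alpha> \<gamma> :: real
  assumes "group G"
    and "\<forall>t\<in>{0<..1}. \<pi> t \<in> {0<..1}"
    and "mono_on {0<..1} \<pi>"
    and "(\<pi> \<longlongrightarrow> 0) (at_right 0)"
    and "\<forall>n. prob_space (M n) \<and> space (M n) = carrier G \<and> sets (M n) = Pow (carrier G)"
    and "detects_index_uniformly G M \<pi>"
    and "\<alpha> \<in> {0<..1}"
    and "dc G M \<ge> ereal \<alpha>"
    and "\<gamma> \<in> {0<..<1}"
    and "\<pi> \<gamma> < \<alpha>"
  shows "limsup (\<lambda>n. ereal (measure (M n)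
           {x \<in> carrier G. gindex G (centraliser G x) \<le> ereal (1 / \<gamma>)}))
         \<ge> ereal (\<alpha> - \<pi> \<gamma>)"
proof (rule limsup_ge_diff_of_eventually_le)
  let ?X = "{x \<in> carrier G. gindex G (centraliser G x) \<le> ereal (1 / \<gamma>)}"
  let ?S = "{(x, y). x \<in> carrier G \<and> y \<in> carrier G \<and> x \<otimes>\<^bsub>G\<^esub> y = y \<otimes>\<^bsub>G\<^esub> x}"
  show "ereal \<alpha> \<le> limsup (\<lambda>n. ereal (measure (M n \<Otimes>\<^sub>M M n) ?S))"
    using assms(8) unfolding dc_def .
  have "\<pi> \<gamma> > 0" using assms(2,9) by auto
  fix e :: real assume "e > 0"
  then obtain N where N: "\<And>n H. n \<ge> N \<Longrightarrow> subgroup H G \<Longrightarrow> \<not> gindex G H \<le> ereal (1 / \<gamma>)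
      \<Longrightarrow> measure (M n) H \<le> \<pi> \<gamma> + e"
    using detects_index_uniformly_eventually_le[OF assms(6,3)] assms(9) by force
  have "measure (M n \<Otimes>\<^sub>M M n) ?S \<le> measure (M n) ?X + (\<pi> \<gamma> + e)" if "n \<ge> N" for n
  proof (rule measure_pair_le_by_sections)
    fix x assume x: "x \<in> space (M n) - ?X"
    then have "Pair x -` ?S = centraliser G x"
      using assms(5) unfolding centraliser_def by auto
    then show "measure (M n) (Pair x -` ?S) \<le> \<pi> \<gamma> + e"
      using N[OF that group.subgroup_centraliser[OF assms(1)]] x assms(5) by auto
  qed (use assms(5) \<open>\<pi> \<gamma> > 0\<close> \<open>e > 0\<close> in auto)
  then show "\<forall>\<^sub>F n in sequentially. measure (M n \<Otimes>\<^sub>M M n) ?S \<le> measure (M n) ?X + (\<pi> \<gamma> + e)"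
    unfolding eventually_sequentially by blast
qed

end
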